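(* Let $n_1,\dots,n_k\ge1$ with $n=\sum_in_i>k$, $n_{\min}=\min_in_i$, $n_{\max}=\max_in_i$. Let $B_k\in\mathbb{R}^{k\times k}$ be symmetric with nonnegative entries, $[B_k]_{ii}=\alpha_{ii}$ and $[B_k]_{ij}=\beta_{ij}$ for $i\ne j$. Let $$P=\begin{bmatrix}\mathbf{1}_{n_1}&0&\cdots&0\\0&\mathbf{1}_{n_2}&\cdots&0\\\vdots&&\ddots&\vdots\\0&0&\cdots&\mathbf{1}_{n_k}\end{bmatrix}\in\mathbb{R}^{n\times k},\quad A_{\mathrm{blk}}=PB_kP^T,\quad L_{\mathrm{blk}}=\mathrm{diag}\{A_{\mathrm{blk}}\mathbf{1}_n\}-A_{\mathrm{blk}}.$$ Suppose $$\Delta:=\min_i\alpha_{ii}-\frac{2n_{\max}}{n_{\min}}\max_i\sum_{j\ne i}\beta_{ij}>0.$$ Define $\tilde B_k=B_k\,\mathrm{diag}\{n_i\}_{i=1}^k$ and $\tilde L_k=\mathrm{diag}\{\tilde B_k\mathbf{1}_k\}-\tilde B_k$, and let $v_i(\tilde L_k)$ be a right eigenvector of $\tilde L_k$ associated with its $i$-th smallest eigenvalue $\lambda_i(\tilde L_k)$. Then: (1) for $i=1,\dots,k$, $\lambda_i(L_{\mathrm{blk}})=\lambda_i(\tilde L_k)$ and $Pv_i(\tilde L_k)$ is an eigenvector of $L_{\mathrm{blk}}$ associated with $\lambda_i(L_{\mathrm{blk}})$ (in particular $L_{\mathrm{blk}}$ is $k$-block-ideal); (2) $\lambda_{k+1}(L_{\mathrm{blk}})\ge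 b_{\min}n_{\min}$, where $b_{\min}=\min_i[B_k\mathbf{1}_k]_i$ is the minimum row sum of $B_k$; (3) $\lambda_{k+1}(L_{\mathrm{blk}})-\lambda_k(L_{\mathrm{blk}})\ge\Delta n_{\min}$.
   Context: $\lambda_i(\cdot)$ denotes the $i$-th smallest eigenvalue (the eigenvalues of $\tilde L_k$ are real). A Laplacian $L$ is $k$-block-ideal with respect to a partition $\{\mathcal{I}_1,\dots,\mathcal{I}_k\}$ of $[n]$ if there is an invertible $S\in\mathbb{R}^{k\times k}$ with $[v_1(L)\ \cdots\ v_k(L)]=[\mathbf{1}_{\mathcal{I}_1}\ \cdots\ \mathbf{1}_{\mathcal{I}_k}]S$, where $v_i(L)$ are orthonormal eigenvectors for the $k$ smallest eigenvalues and $\mathbf{1}_\mathcal{I}$ is the indicator vector of $\mathcal{I}$; here the partition is into consecutive blocks of sizes $n_1,\dots,n_k$. *)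

theory Defs
  imports "Jordan_Normal_Form.Matrix" "Jordan_Normal_Form.Char_Poly"
    "HOL-Computational_Algebra.Polynomial"
begin

text \<open>Eigenvalues of a square real matrix, listed with algebraic multiplicity
  (roots of the characteristic polynomial) in increasing order.
  lambda_i A (1-indexed) is the i-th smallest eigenvalue.\<close>
definition eigs_sorted :: "real mat \<Rightarrow> real list" where
  "eigs_sorted A = sorted_list_of_multiset (proots (char_poly A))"

definition lambda_i :: "real mat \<Rightarrow> nat \<Rightarrow> real" where
  "lambda_i A i = eigs_sorted A ! (i - 1)"

definition laplacian :: "real mat \<Rightarrow> real mat" where
  "laplacian A = mat (dim_row A) (dim_row A)
     (\<lambda>(i,j). (if i = j then (\<Sum>l<dim_col A. A $$ (i,l)) else 0) - A $$ (i,j))"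

definition diag_of :: "nat \<Rightarrow> (nat \<Rightarrow> real) \<Rightarrow> real mat" where
  "diag_of k d = mat k k (\<lambda>(i,j). if i = j then d i else 0)"

text \<open>Consecutive blocks of sizes ns 0, ..., ns (k-1) (0-indexed): block j is
  the index set [start j, start (j+1)).\<close>
definition block_start :: "(nat \<Rightarrow> nat) \<Rightarrow> nat \<Rightarrow> nat" where
  "block_start ns j = (\<Sum>l<j. ns l)"

definition in_block :: "(nat \<Rightarrow> nat) \<Rightarrow> nat \<Rightarrow> nat \<Rightarrow> bool" where
  "in_block ns j r \<longleftrightarrow> block_start ns j \<le> r \<and> r < block_start ns (Suc j)"

definition Pmat :: "nat \<Rightarrow> (nat \<Rightarrow> nat) \<Rightarrow> real mat" where
  "Pmat k ns = mat (block_start ns k) k (\<lambda>(r,j). if in_block ns j r then 1 else 0)"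

definition ortho_eigs_k :: "real mat \<Rightarrow> nat \<Rightarrow> real vec list \<Rightarrow> bool" where
  "ortho_eigs_k L k V \<longleftrightarrow> length V = k \<and>
     (\<forall>i<k. eigenvector L (V ! i) (lambda_i L (Suc i))) \<and>
     (\<forall>i<k. \<forall>j<k. (V ! i) \<bullet> (V ! j) = (if i = j then 1 else 0))"

definition k_block_ideal :: "real mat \<Rightarrow> nat \<Rightarrow> (nat \<Rightarrow> nat) \<Rightarrow> bool" where
  "k_block_ideal L k ns \<longleftrightarrow>
     (\<exists>V. ortho_eigs_k L k V) \<and>
     (\<forall>V. ortho_eigs_k L k V \<longrightarrow>
        (\<exists>S \<in> carrier_mat k k. invertible_mat S \<and>
           mat_of_cols (dim_row L) V = Pmat k ns * S))"

end

(*
  Let d_j = sum_l B_jl n_l be the lumped degrees, i.e. the diagonal of L_tilde. The block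
  indicator matrix P intertwines the two Laplacians, L_blk P = P L_tilde, so P maps eigenvectors
  of L_tilde to eigenvectors of L_blk. Completing the columns of P by the unit vectors of the rows
  that do not start a block gives a basis in which L_blk is block upper triangular with diagonal
  blocks L_tilde and diag(d_j, each repeated n_j - 1 times); hence the spectrum of L_blk consists
  of that of L_tilde together with these degrees. By a Gershgorin-type argument every eigenvalue
  of L_tilde is at most 2 n_max max_i sum_(j ~= i) beta_ij, whereas d_j >= alpha_min n_min and
  d_j >= b_min n_min. The hypothesis Delta > 0 separates the two groups, which gives (1)-(3).
  Finally, an eigenvector of L_blk whose eigenvalue lies below all d_j is constant on blocks,
  i.e. lies in the range of P; applied to orthonormal eigenvectors for the k smallest
  eigenvalues, which exist by the spectral theorem, this gives k-block-idealness.
*)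
theory Submission
  imports Defs "Jordan_Normal_Form.Schur_Decomposition"
begin

section \<open>Spectral theorem for real symmetric matrices\<close>

lemma symmetric_entry:
  assumes "S \<in> carrier_mat n n" "transpose_mat S = S" "i < n" "j < n"
  shows "S $$ (i,j) = S $$ (j,i)"
  using assms by (metis index_transpose_mat(1) carrier_matD)

lemma real_symmetric_complex_eigenvalue_real:
  fixes S :: "real mat"
  assumes S: "S \<in> carrier_mat n n" and sym: "transpose_mat S = S"
    and ev: "eigenvector (map_mat complex_of_real S) v z"
  shows "z \<in> \<real>"
proof -
  let ?s = "\<lambda>i j. complex_of_real (S $$ (i,j))"
  have v: "v \<in> carrier_vec n" and v0: "v \<noteq> 0\<^sub>v n"
    and Sv: "map_mat complex_of_real S *\<^sub>v v = z \<cdot>\<^sub>v v"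
    using ev S unfolding eigenvector_def by auto
  have row_eq: "(\<Sum>j<n. ?s i j * v $ j) = z * v $ i" if "i < n" for i
  proof -
    have "(map_mat complex_of_real S *\<^sub>v v) $ i = (\<Sum>j<n. ?s i j * v $ j)"
      using that S v by (simp add: scalar_prod_def lessThan_atLeast0)
    then show ?thesis using Sv that v by simp
  qed
  \<comment> \<open>The Rayleigh quotient \<open>q = v\<^sup>* S v\<close> equals \<open>z |v|\<^sup>2\<close> and is real by symmetry.\<close>
  define q where "q = (\<Sum>i<n. cnj (v $ i) * (\<Sum>j<n. ?s i j * v $ j))"
  define N where "N = (\<Sum>i<n. (cmod (v $ i))\<^sup>2)"
  have "q = (\<Sum>i<n. z * (v $ i * cnj (v $ i)))"
    unfolding q_def by (intro sum.cong refl) (simp add: row_eq)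
  also have "\<dots> = z * complex_of_real N"
    unfolding N_def of_real_sum sum_distrib_left
    by (intro sum.cong refl) (simp add: complex_norm_square[symmetric])
  finally have q_eq: "q = z * complex_of_real N" .
  have "cnj q = (\<Sum>i<n. \<Sum>j<n. v $ i * (?s i j * cnj (v $ j)))"
    unfolding q_def by (simp add: sum_distrib_left)
  also have "\<dots> = (\<Sum>j<n. \<Sum>i<n. v $ i * (?s i j * cnj (v $ j)))"
    by (rule sum.swap)
  also have "\<dots> = q"
    unfolding q_def sum_distrib_left
    by (intro sum.cong refl) (simp add: symmetric_entry[OF S sym] mult_ac)
  finally have "q \<in> \<real>" by (metis Reals_cnj_iff)
  obtain i where "i < n" "v $ i \<noteq> 0"
    using v v0 by (metis eq_vecI carrier_vecD index_zero_vec)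
  then have "N > 0" unfolding N_def by (intro sum_pos2[of _ i]) auto
  then show ?thesis
    using \<open>q \<in> \<real>\<close> q_eq by (metis Reals_divide Reals_of_real nonzero_mult_div_cancel_right of_real_eq_0_iff less_irrefl)
qed

lemma real_symmetric_has_unit_eigenvector:
  fixes S :: "real mat"
  assumes S: "S \<in> carrier_mat n n" and sym: "transpose_mat S = S" and n: "0 < n"
  shows "\<exists>e u. u \<in> carrier_vec n \<and> u \<bullet> u = 1 \<and> S *\<^sub>v u = e \<cdot>\<^sub>v u"
proof -
  let ?Sc = "map_mat complex_of_real S"
  have Sc: "?Sc \<in> carrier_mat n n" using S by simp
  obtain as where cp: "char_poly ?Sc = (\<Prod>a\<leftarrow>as. [:-a, 1:])" and "length as = n"
    using char_poly_factorized[OF Sc] by blast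
  then have "as ! 0 \<in> set as" using n by simp
  then have "eigenvalue ?Sc (as ! 0)"
    unfolding eigenvalue_root_char_poly[OF Sc] cp by (auto simp: poly_prod_list prod_list_zero_iff)
  then obtain e where e: "as ! 0 = complex_of_real e"
    using real_symmetric_complex_eigenvalue_real[OF S sym] unfolding eigenvalue_def by (metis Reals_cases)
  have "poly (char_poly ?Sc) (complex_of_real e) = 0"
    using \<open>eigenvalue ?Sc (as ! 0)\<close> e eigenvalue_root_char_poly[OF Sc] by simp
  then have "poly (char_poly S) e = 0"
    unfolding of_real_hom.char_poly_hom[OF S] by (simp add: of_real_hom.poly_map_poly)
  then obtain v where "eigenvector S v e" using eigenvalue_root_char_poly[OF S] unfolding eigenvalue_def by blast
  then have v: "v \<in> carrier_vec n" "v \<noteq> 0\<^sub>v n" and Sv: "S *\<^sub>v v = e \<cdot>\<^sub>v v"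
    using S unfolding eigenvector_def by auto
  have "v \<bullet> v > 0" using conjugate_square_greater_0_vec[OF v(1)] v(2) by simp
  define u where "u = (1 / sqrt (v \<bullet> v)) \<cdot>\<^sub>v v"
  have "u \<in> carrier_vec n" "u \<bullet> u = 1" "S *\<^sub>v u = e \<cdot>\<^sub>v u"
    using v Sv \<open>v \<bullet> v > 0\<close> mult_mat_vec[OF S v(1)] unfolding u_def
    by (auto simp: smult_scalar_prod_distrib[of _ n] scalar_prod_smult_distrib[of _ n]
      smult_smult_assoc mult.commute)
  then show ?thesis by blast
qed

lemma transpose_mult_self_eq_one_iff:
  assumes "W \<in> carrier_mat n k"
  shows "transpose_mat W * W = 1\<^sub>m k \<longleftrightarrow>
    (\<forall>i<k. \<forall>j<k. col W i \<bullet> col W j = (if i = j then 1 else 0))"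
  using assms unfolding mat_eq_iff by auto

lemma orthogonal_mat_with_first_col:
  fixes u :: "real vec"
  assumes u: "u \<in> carrier_vec n" and unit: "u \<bullet> u = 1"
  shows "\<exists>W \<in> carrier_mat n n. transpose_mat W * W = 1\<^sub>m n \<and> col W 0 = u"
proof -
  interpret cof_vec_space n "TYPE(real)" .
  have "u \<noteq> 0\<^sub>v n" using unit u by auto
  obtain us where b: "basis_completion u = u # us"
    by (simp add: basis_completion_def Let_def)
  have b_props: "set (u # us) \<subseteq> carrier_vec n" "distinct (u # us)" "\<not> lin_dep (set (u # us))"
      "length (u # us) = n"
    using basis_completion[OF u \<open>u \<noteq> 0\<^sub>v n\<close>] unfolding b by auto
  define ws where "ws = gram_schmidt n (u # us)"
  have ws: "corthogonal ws" "set ws \<subseteq> carrier_vec n" "length ws = n" "hd ws = u"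
    using gram_schmidt_result[OF b_props(1-3) ws_def] b_props(4) gram_schmidt_hd[OF u, of us]
    unfolding ws_def by auto
  define nrm where "nrm w = (1 / sqrt (w \<bullet> w)) \<cdot>\<^sub>v w" for w :: "real vec"
  define W where "W = mat_of_cols n (map nrm ws)"
  have W: "W \<in> carrier_mat n n" unfolding W_def using ws(3) by (simp add: mat_of_cols_def)
  have ws_i: "ws ! i \<in> carrier_vec n" if "i < n" for i using ws that by auto
  have col_W: "col W i = nrm (ws ! i)" if "i < n" for i
    unfolding W_def nrm_def using that ws ws_i by (simp add: col_mat_of_cols)
  have ws_orth: "ws ! i \<bullet> ws ! j = 0 \<longleftrightarrow> i \<noteq> j" if "i < n" "j < n" for i j
    using corthogonalD[OF ws(1)] that ws(3) by simp
  have "col W i \<bullet> col W j = (if i = j then 1 else 0)" if "i < n" "j < n" for i j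
  proof -
    have pos: "ws ! i \<bullet> ws ! i > 0"
      using ws_orth[of i i] that ws_i[of i] conjugate_square_ge_0_vec[of "ws ! i"] by simp
    show ?thesis
      using that col_W ws_orth[OF that] pos ws_i[OF that(1)] ws_i[OF that(2)]
      by (auto simp: nrm_def smult_scalar_prod_distrib[of _ n] scalar_prod_smult_distrib[of _ n])
  qed
  then have "transpose_mat W * W = 1\<^sub>m n" using transpose_mult_self_eq_one_iff[OF W] by blast
  moreover have "col W 0 = u"
  proof -
    have "0 < n" using \<open>u \<noteq> 0\<^sub>v n\<close> u by (cases n) auto
    moreover have "ws ! 0 = u" using ws(3,4) hd_conv_nth[of ws] calculation by auto
    ultimately show ?thesis using col_W[of 0] unit by (simp add: nrm_def)
  qed
  ultimately show ?thesis using W by blast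
qed

lemma symmetric_congruence:
  fixes S W :: "'a :: comm_ring_1 mat"
  assumes S: "S \<in> carrier_mat n n" and W: "W \<in> carrier_mat n m" and sym: "transpose_mat S = S"
  shows "transpose_mat (transpose_mat W * S * W) = transpose_mat W * S * W"
proof -
  have "transpose_mat (transpose_mat W * S * W) = transpose_mat W * (transpose_mat S * W)"
    using transpose_mult[of "transpose_mat W * S" m n W m] transpose_mult[of "transpose_mat W" m n S n] W S
    by simp
  also have "\<dots> = transpose_mat W * S * W"
    unfolding sym using W S by (simp add: assoc_mult_mat[of _ m n _ n _ m])
  finally show ?thesis .
qed

lemma orthogonal_mat_mult:
  fixes W F :: "'a :: comm_ring_1 mat"
  assumes W: "W \<in> carrier_mat n n" and F: "F \<in> carrier_mat n n"
    and WTW: "transpose_mat W * W = 1\<^sub>m n" and FTF: "transpose_mat F * F = 1\<^sub>m n"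
  shows "transpose_mat (W * F) * (W * F) = 1\<^sub>m n"
proof -
  have "transpose_mat W * (W * F) = F"
    using W F by (simp add: assoc_mult_mat[symmetric, of _ n n _ n _ n] WTW)
  then show ?thesis
    using W F FTF by (simp add: transpose_mult[of _ n n] assoc_mult_mat[of _ n n _ n _ n])
qed

lemma symmetric_mat_deflation:
  fixes S :: "real mat"
  assumes S: "S \<in> carrier_mat (Suc m) (Suc m)" and sym: "transpose_mat S = S"
  shows "\<exists>W e S'. W \<in> carrier_mat (Suc m) (Suc m) \<and> transpose_mat W * W = 1\<^sub>m (Suc m) \<and>
    S' \<in> carrier_mat m m \<and> transpose_mat S' = S' \<and>
    transpose_mat W * S * W = four_block_mat (mat 1 1 (\<lambda>_. e)) (0\<^sub>m 1 m) (0\<^sub>m m 1) S'"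
proof -
  obtain e u where u: "u \<in> carrier_vec (Suc m)" "u \<bullet> u = 1" "S *\<^sub>v u = e \<cdot>\<^sub>v u"
    using real_symmetric_has_unit_eigenvector[OF S sym] by blast
  obtain W where W: "W \<in> carrier_mat (Suc m) (Suc m)" and WTW: "transpose_mat W * W = 1\<^sub>m (Suc m)"
    and col_W0: "col W 0 = u"
    using orthogonal_mat_with_first_col[OF u(1,2)] by blast
  define A where "A = transpose_mat W * S * W"
  have A: "A \<in> carrier_mat (Suc m) (Suc m)" unfolding A_def using W S by simp
  have A_sym: "A $$ (i,j) = A $$ (j,i)" if "i < Suc m" "j < Suc m" for i j
    using symmetric_entry[OF A symmetric_congruence[OF S W sym, folded A_def]] that by blast
  have A_col0: "A $$ (i,0) = (if i = 0 then e else 0)" if "i < Suc m" for i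
  proof -
    have "A = transpose_mat W * (S * W)"
      unfolding A_def using W S by (simp add: assoc_mult_mat[of _ "Suc m" "Suc m" _ "Suc m" _ "Suc m"])
    then have "A $$ (i,0) = col W i \<bullet> (S *\<^sub>v col W 0)"
      using that W S by (simp add: col_mult2[of _ "Suc m" "Suc m"] del: col_mult)
    also have "\<dots> = e * (col W i \<bullet> col W 0)"
      using u W that col_W0 by (simp add: scalar_prod_smult_distrib[of _ "Suc m"])
    finally show ?thesis
      using WTW that W unfolding transpose_mult_self_eq_one_iff[OF W] by simp
  qed
  define S' where "S' = mat m m (\<lambda>(i,j). A $$ (Suc i, Suc j))"
  have "transpose_mat S' = S'" unfolding S'_def by (rule eq_matI) (auto simp: A_sym)
  moreover have "A = four_block_mat (mat 1 1 (\<lambda>_. e)) (0\<^sub>m 1 m) (0\<^sub>m m 1) S'"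
  proof (rule eq_matI)
    fix i j assume "i < dim_row (four_block_mat (mat 1 1 (\<lambda>_. e)) (0\<^sub>m 1 m) (0\<^sub>m m 1) S')"
      "j < dim_col (four_block_mat (mat 1 1 (\<lambda>_. e)) (0\<^sub>m 1 m) (0\<^sub>m m 1) S')"
    then have "i < Suc m" "j < Suc m" by (auto simp: S'_def)
    then show "A $$ (i,j) = four_block_mat (mat 1 1 (\<lambda>_. e)) (0\<^sub>m 1 m) (0\<^sub>m m 1) S' $$ (i,j)"
      using A_col0 A_sym[of 0 j] A_col0[of j] by (auto simp: S'_def)
  qed (use A in \<open>auto simp: S'_def\<close>)
  ultimately show ?thesis using W WTW unfolding A_def by (intro exI[of _ W] exI[of _ e] exI[of _ S']) (auto simp: S'_def)
qed

theorem symmetric_mat_orthogonally_diagonalizable: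
  fixes S :: "real mat"
  assumes "S \<in> carrier_mat n n" and "transpose_mat S = S"
  shows "\<exists>U d. U \<in> carrier_mat n n \<and> transpose_mat U * U = 1\<^sub>m n \<and> S * U = U * diag_of n d"
  using assms
proof (induction n arbitrary: S)
  case 0
  then show ?case by (intro exI[of _ "1\<^sub>m 0"]) (auto simp: diag_of_def mat_eq_iff)
next
  case (Suc m)
  note S = Suc.prems(1)
  obtain W e S' where W: "W \<in> carrier_mat (Suc m) (Suc m)" and WTW: "transpose_mat W * W = 1\<^sub>m (Suc m)"
    and S': "S' \<in> carrier_mat m m" "transpose_mat S' = S'"
    and blocks: "transpose_mat W * S * W = four_block_mat (mat 1 1 (\<lambda>_. e)) (0\<^sub>m 1 m) (0\<^sub>m m 1) S'"
    using symmetric_mat_deflation[OF Suc.prems] by blast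
  obtain U' d' where U': "U' \<in> carrier_mat m m" "transpose_mat U' * U' = 1\<^sub>m m"
    and S'U': "S' * U' = U' * diag_of m d'"
    using Suc.IH[OF S'] by blast
  define F where "F = four_block_mat (1\<^sub>m 1) (0\<^sub>m 1 m) (0\<^sub>m m 1) U'"
  define d where "d i = (if i = 0 then e else d' (i - 1))" for i
  have F: "F \<in> carrier_mat (Suc m) (Suc m)" unfolding F_def using U' by auto
  have F_T: "transpose_mat F = four_block_mat (1\<^sub>m 1) (0\<^sub>m 1 m) (0\<^sub>m m 1) (transpose_mat U')"
    unfolding F_def using U' by (intro eq_matI) auto
  have "transpose_mat F * F = 1\<^sub>m (Suc m)"
    unfolding F_T unfolding F_def using U'
    by (subst mult_four_block_mat[of _ 1 1 _ m _ m]) auto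
  then have WF_orth: "transpose_mat (W * F) * (W * F) = 1\<^sub>m (Suc m)"
    by (rule orthogonal_mat_mult[OF W F WTW])
  have D_blocks: "diag_of (Suc m) d = four_block_mat (mat 1 1 (\<lambda>_. e)) (0\<^sub>m 1 m) (0\<^sub>m m 1) (diag_of m d')"
    by (rule eq_matI) (auto simp: diag_of_def d_def)
  have "four_block_mat (mat 1 1 (\<lambda>_. e)) (0\<^sub>m 1 m) (0\<^sub>m m 1) S' * F = F * diag_of (Suc m) d"
    unfolding F_def D_blocks using U' S' S'U'
    by (subst (1 2) mult_four_block_mat[of _ 1 1 _ m _ m]) (auto simp: diag_of_def)
  then have "transpose_mat W * (S * (W * F)) = F * diag_of (Suc m) d"
    unfolding blocks[symmetric] using W F S by (simp add: assoc_mult_mat[of _ "Suc m" "Suc m" _ "Suc m" _ "Suc m"])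
  moreover have "W * transpose_mat W = 1\<^sub>m (Suc m)"
    using mat_mult_left_right_inverse[OF _ W WTW] W by simp
  ultimately have "S * (W * F) = W * (F * diag_of (Suc m) d)"
    using W F S assoc_mult_mat[of W "Suc m" "Suc m" "transpose_mat W" "Suc m" "S * (W * F)" "Suc m"]
    by simp
  then have "S * (W * F) = W * F * diag_of (Suc m) d"
    using W F by (simp add: assoc_mult_mat[of _ "Suc m" "Suc m" _ "Suc m" _ "Suc m"] diag_of_def)
  then show ?case using WF_orth W F by (intro exI[of _ "W * F"] exI[of _ d]) auto
qed

lemma proots_prod_linear_factors: "proots (\<Prod>a\<leftarrow>ds. [:- a, 1:]) = mset (ds :: real list)"
proof (induction ds)
  case (Cons a ds)
  have "(\<Prod>a\<leftarrow>ds. [:- a, 1:]) \<noteq> (0 :: real poly)" by (auto simp: prod_list_zero_iff)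
  then have "proots (\<Prod>a\<leftarrow>a # ds. [:- a, 1:]) = proots [:- a, 1:] + proots (\<Prod>a\<leftarrow>ds. [:- a, 1:])"
    by (simp add: proots_mult del: mult_pCons_left)
  then show ?case using Cons proots_linear_factor[of "- a"] by simp
qed simp

lemma char_poly_diag_of: "char_poly (diag_of n d) = (\<Prod>a\<leftarrow>map d [0..<n]. [:- a, 1:])"
proof -
  have "upper_triangular (diag_of n d)" by (simp add: upper_triangular_def diag_of_def)
  moreover have "diag_mat (diag_of n d) = map d [0..<n]"
    unfolding diag_mat_def diag_of_def by (simp add: list_eq_iff_nth_eq)
  ultimately show ?thesis
    using char_poly_upper_triangular[of "diag_of n d" n] by (simp add: diag_of_def)
qed

lemma eigs_sorted_diag_of: "eigs_sorted (diag_of n d) = sort (map d [0..<n])"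
  unfolding eigs_sorted_def char_poly_diag_of proots_prod_linear_factors
  by (rule sorted_list_of_multiset_mset)

lemma col_mult_diag_of:
  "U \<in> carrier_mat m n \<Longrightarrow> i < n \<Longrightarrow> col (U * diag_of n d) i = d i \<cdot>\<^sub>v col U i"
  by (intro eq_vecI) (auto simp: diag_of_def scalar_prod_def if_distrib cong: if_cong)

lemma eigs_sorted_orthogonally_diagonalized:
  fixes S :: "real mat"
  assumes S: "S \<in> carrier_mat n n" and U: "U \<in> carrier_mat n n"
    and UTU: "transpose_mat U * U = 1\<^sub>m n" and SU: "S * U = U * diag_of n d"
  shows "eigs_sorted S = sort (map d [0..<n])"
proof -
  have D: "diag_of n d \<in> carrier_mat n n" by (simp add: diag_of_def)
  have UUT: "U * transpose_mat U = 1\<^sub>m n" using mat_mult_left_right_inverse[OF _ U UTU] U by simp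
  have "S = S * (U * transpose_mat U)" using S UUT by simp
  also have "\<dots> = U * diag_of n d * transpose_mat U"
    using S U by (simp add: assoc_mult_mat[symmetric, of S n n U n "transpose_mat U" n] SU)
  finally have "similar_mat_wit S (diag_of n d) U (transpose_mat U)"
    unfolding similar_mat_wit_def Let_def using S U D UTU UUT by auto
  then have "char_poly S = char_poly (diag_of n d)"
    by (intro char_poly_similar) (auto simp: similar_mat_def)
  then show ?thesis using eigs_sorted_diag_of unfolding eigs_sorted_def by simp
qed

lemma ortho_eigs_k_of_eigenpairs:
  fixes S :: "real mat" and ps :: "(real vec \<times> real) list"
  assumes S: "S \<in> carrier_mat n n" and len: "length ps = n"
    and eigs: "map snd ps = eigs_sorted S" and dist: "distinct (map fst ps)"
    and eig: "\<And>u e. (u, e) \<in> set ps \<Longrightarrow> u \<in> carrier_vec n \<and> S *\<^sub>v u = e \<cdot>\<^sub>v u"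
    and orth: "\<And>u e w f. (u, e) \<in> set ps \<Longrightarrow> (w, f) \<in> set ps \<Longrightarrow> u \<bullet> w = (if u = w then 1 else 0)"
  shows "ortho_eigs_k S n (map fst ps)"
  unfolding ortho_eigs_k_def lambda_i_def
proof (intro conjI allI impI)
  fix i j assume "i < n" "j < n"
  then show "map fst ps ! i \<bullet> map fst ps ! j = (if i = j then 1 else 0)"
    using orth[of "fst (ps ! i)" "snd (ps ! i)" "fst (ps ! j)" "snd (ps ! j)"]
      nth_eq_iff_index_eq[OF dist, of i j] len by simp
next
  fix i assume "i < n"
  then have "(fst (ps ! i), snd (ps ! i)) \<in> set ps" using len by simp
  moreover have "snd (ps ! i) = eigs_sorted S ! i" using \<open>i < n\<close> len eigs by (metis nth_map)
  ultimately show "eigenvector S (map fst ps ! i) (eigs_sorted S ! (Suc i - 1))"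
    using eig orth[of "fst (ps ! i)" _ "fst (ps ! i)"] S \<open>i < n\<close> len
    unfolding eigenvector_def by (metis One_nat_def diff_Suc_1 nth_map scalar_prod_left_zero zero_neq_one carrier_matD(1))
qed (simp add: len)

theorem symmetric_mat_ortho_eigs:
  fixes S :: "real mat"
  assumes S: "S \<in> carrier_mat n n" and sym: "transpose_mat S = S"
  shows "length (eigs_sorted S) = n \<and> (\<exists>us. ortho_eigs_k S n us)"
proof -
  obtain U d where U: "U \<in> carrier_mat n n" and UTU: "transpose_mat U * U = 1\<^sub>m n"
    and SU: "S * U = U * diag_of n d"
    using symmetric_mat_orthogonally_diagonalizable[OF S sym] by blast
  have eigs: "eigs_sorted S = sort (map d [0..<n])"
    by (rule eigs_sorted_orthogonally_diagonalized[OF S U UTU SU])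
  have orth: "col U i \<bullet> col U j = (if i = j then 1 else 0)" if "i < n" "j < n" for i j
    using UTU that unfolding transpose_mult_self_eq_one_iff[OF U] by blast
  have inj_col: "inj_on (col U) {0..<n}"
    by (rule inj_onI) (metis atLeastLessThan_iff orth zero_neq_one)
  define xs where "xs = map (\<lambda>i. (col U i, d i)) [0..<n]"
  define ps where "ps = sort_key snd xs"
  have "ortho_eigs_k S n (map fst ps)"
  proof (rule ortho_eigs_k_of_eigenpairs[OF S])
    show "length ps = n" unfolding ps_def xs_def by simp
    show "map snd ps = eigs_sorted S"
      unfolding eigs ps_def xs_def by (rule properties_for_sort[symmetric]) (simp_all add: comp_def multiset.map_comp)
    have "distinct (map fst xs)" unfolding xs_def using inj_col by (simp add: distinct_map comp_def)
    then show "distinct (map fst ps)"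
      unfolding ps_def by (metis mset_eq_imp_distinct_iff mset_map mset_sort)
    show "u \<in> carrier_vec n \<and> S *\<^sub>v u = e \<cdot>\<^sub>v u" if "(u, e) \<in> set ps" for u e
      using that S U col_mult_diag_of[OF U, of _ d]
      by (auto simp: ps_def xs_def SU[symmetric] simp del: col_mult)
    show "u \<bullet> w = (if u = w then 1 else 0)" if "(u, e) \<in> set ps" "(w, f) \<in> set ps" for u e w f
      using that orth inj_on_eq_iff[OF inj_col] by (auto simp: ps_def xs_def)
  qed
  then show ?thesis by (auto simp: eigs)
qed

lemma ortho_eigs_k_take: "ortho_eigs_k A n us \<Longrightarrow> m \<le> n \<Longrightarrow> ortho_eigs_k A m (take m us)"
  unfolding ortho_eigs_k_def by auto

section \<open>Characteristic polynomials and sorted spectra\<close>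

lemma char_poly_four_block_lower_left_zero:
  fixes A :: "'a :: idom mat"
  assumes A: "A \<in> carrier_mat n n" and X: "X \<in> carrier_mat n m" and D: "D \<in> carrier_mat m m"
  shows "char_poly (four_block_mat A X (0\<^sub>m m n) D) = char_poly A * char_poly D"
proof -
  let ?cm = "\<lambda>A. [:0, 1:] \<cdot>\<^sub>m 1\<^sub>m (dim_row A) + map_mat (\<lambda>a. [:- a:]) A"
  have "?cm (four_block_mat A X (0\<^sub>m m n) D) = four_block_mat (?cm A) (map_mat (\<lambda>a. [:- a:]) X) (0\<^sub>m m n) (?cm D)"
    using A X D by (intro eq_matI) (auto simp: one_poly_def)
  moreover have "det (four_block_mat (?cm A) (map_mat (\<lambda>a. [:- a:]) X) (0\<^sub>m m n) (?cm D)) = det (?cm A) * det (?cm D)"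
    using A X D by (intro det_four_block_mat_lower_left_zero[OF _ _ refl]) auto
  ultimately show ?thesis unfolding char_poly_defs by simp
qed

lemma char_poly_eq_if_intertwined:
  fixes L M Q :: "'a :: field mat"
  assumes L: "L \<in> carrier_mat n n" and M: "M \<in> carrier_mat n n" and Q: "Q \<in> carrier_mat n n"
    and det_Q: "det Q \<noteq> 0" and LQ: "L * Q = Q * M"
  shows "char_poly L = char_poly M"
proof -
  obtain Q' where Q': "Q' \<in> carrier_mat n n" "Q * Q' = 1\<^sub>m n" "Q' * Q = 1\<^sub>m n"
    using det_non_zero_imp_unit[OF Q det_Q, of undefined] unfolding Units_def ring_mat_def by auto
  have "L = L * (Q * Q')" using L Q' by simp
  also have "\<dots> = Q * M * Q'" using L Q Q' by (simp flip: LQ add: assoc_mult_mat[of _ n n _ n _ n])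
  finally have "similar_mat_wit L M Q Q'" unfolding similar_mat_wit_def Let_def using L M Q Q' by auto
  then show ?thesis by (intro char_poly_similar) (auto simp: similar_mat_def)
qed

lemma in_proots_char_poly_iff:
  fixes A :: "'a :: field mat"
  assumes "A \<in> carrier_mat n n"
  shows "x \<in># proots (char_poly A) \<longleftrightarrow> eigenvalue A x"
proof -
  have "char_poly A \<noteq> 0" using degree_monic_char_poly[OF assms] by auto
  then show ?thesis using eigenvalue_root_char_poly[OF assms] by simp
qed

lemma eigenvalue_lambda_i:
  fixes A :: "real mat"
  assumes "A \<in> carrier_mat n n" "1 \<le> i" "i \<le> length (eigs_sorted A)"
  shows "eigenvalue A (lambda_i A i)"
proof -
  have "lambda_i A i \<in> set (eigs_sorted A)" using assms(2,3) unfolding lambda_i_def by simp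
  then show ?thesis using in_proots_char_poly_iff[OF assms(1)] unfolding eigs_sorted_def by simp
qed

lemma sorted_list_of_multiset_plus:
  fixes A C :: "'a :: linorder multiset"
  assumes "\<forall>a\<in>#A. \<forall>b\<in>#C. a \<le> b"
  shows "sorted_list_of_multiset (A + C) = sorted_list_of_multiset A @ sorted_list_of_multiset C"
proof -
  have "sorted (sorted_list_of_multiset A @ sorted_list_of_multiset C)"
    using assms by (simp add: sorted_append)
  moreover have "mset (sorted_list_of_multiset A @ sorted_list_of_multiset C) = A + C" by simp
  ultimately show ?thesis by (metis sorted_list_of_multiset_mset sorted_sort_id)
qed

lemma invertible_if_orthonormal_factor:
  fixes W P S :: "'a :: field mat"
  assumes W: "W \<in> carrier_mat n k" and P: "P \<in> carrier_mat n k" and S: "S \<in> carrier_mat k k"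
    and WTW: "transpose_mat W * W = 1\<^sub>m k" and WPS: "W = P * S"
  shows "invertible_mat S"
proof -
  let ?R = "transpose_mat W * P"
  have R: "?R \<in> carrier_mat k k" using W P by simp
  have RS: "?R * S = 1\<^sub>m k" using W P S WTW unfolding WPS by (simp add: assoc_mult_mat[of _ k n _ k _ k])
  then have "S * ?R = 1\<^sub>m k" by (rule mat_mult_left_right_inverse[OF R S])
  then show ?thesis
    unfolding invertible_mat_def inverts_mat_def using RS R S by auto
qed

section \<open>Laplacians\<close>

lemma laplacian_carrier: "M \<in> carrier_mat m m \<Longrightarrow> laplacian M \<in> carrier_mat m m"
  unfolding laplacian_def by auto

lemma laplacian_index:
  "M \<in> carrier_mat m m \<Longrightarrow> i < m \<Longrightarrow> j < m \<Longrightarrow>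
    laplacian M $$ (i,j) = (if i = j then (\<Sum>l<m. M $$ (i,l)) else 0) - M $$ (i,j)"
  unfolding laplacian_def by auto

lemma laplacian_mult_vec_index:
  fixes M :: "real mat"
  assumes M: "M \<in> carrier_mat n n" and v: "v \<in> carrier_vec n" and i: "i < n"
  shows "(laplacian M *\<^sub>v v) $ i = (\<Sum>j\<in>{..<n} - {i}. M $$ (i,j) * (v $ i - v $ j))"
proof -
  have "(laplacian M *\<^sub>v v) $ i = (\<Sum>j<n. laplacian M $$ (i,j) * v $ j)"
    using M v i laplacian_carrier[OF M] by (simp add: scalar_prod_def lessThan_atLeast0)
  also have "\<dots> = (\<Sum>j<n. M $$ (i,j)) * v $ i - (\<Sum>j<n. M $$ (i,j) * v $ j)"
    using i by (simp add: laplacian_index[OF M] left_diff_distrib sum_subtractf if_distrib[of "\<lambda>x. x * _"] cong: if_cong)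
  also have "\<dots> = (\<Sum>j<n. M $$ (i,j) * (v $ i - v $ j))"
    by (simp add: sum_distrib_right right_diff_distrib sum_subtractf)
  also have "\<dots> = (\<Sum>j\<in>{..<n} - {i}. M $$ (i,j) * (v $ i - v $ j))"
    using i by (intro sum.mono_neutral_right) auto
  finally show ?thesis .
qed

lemma laplacian_eigenvalue_le_twice_row_sum:
  fixes M :: "real mat"
  assumes M: "M \<in> carrier_mat n n" and nonneg: "\<forall>i<n. \<forall>j<n. i \<noteq> j \<longrightarrow> M $$ (i,j) \<ge> 0"
    and ev: "eigenvector (laplacian M) v \<mu>"
  shows "\<exists>i<n. \<mu> \<le> 2 * (\<Sum>j\<in>{..<n} - {i}. M $$ (i,j))"
proof -
  have v: "v \<in> carrier_vec n" "v \<noteq> 0\<^sub>v n" and Lv: "laplacian M *\<^sub>v v = \<mu> \<cdot>\<^sub>v v"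
    using ev laplacian_carrier[OF M] unfolding eigenvector_def by auto
  obtain j0 where j0: "j0 < n" "v $ j0 \<noteq> 0" using v by (metis eq_vecI carrier_vecD index_zero_vec)
  let ?m = "Max ((\<lambda>j. \<bar>v $ j\<bar>) ` {..<n})"
  have "?m \<in> (\<lambda>j. \<bar>v $ j\<bar>) ` {..<n}" by (rule Max_in) (use j0 in auto)
  then obtain i where i: "i < n" and "\<bar>v $ i\<bar> = ?m" by auto
  then have i_max: "\<bar>v $ j\<bar> \<le> \<bar>v $ i\<bar>" if "j < n" for j
    using Max_ge[of "(\<lambda>j. \<bar>v $ j\<bar>) ` {..<n}"] that by simp
  have vi: "\<bar>v $ i\<bar> > 0" using i_max[OF j0(1)] j0(2) by linarith
  have "\<mu> * v $ i = (\<Sum>j\<in>{..<n} - {i}. M $$ (i,j) * (v $ i - v $ j))"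
    using laplacian_mult_vec_index[OF M v(1) i] Lv i v by simp
  then have "\<bar>\<mu>\<bar> * \<bar>v $ i\<bar> = \<bar>\<Sum>j\<in>{..<n} - {i}. M $$ (i,j) * (v $ i - v $ j)\<bar>"
    by (metis abs_mult)
  also have "\<dots> \<le> (\<Sum>j\<in>{..<n} - {i}. M $$ (i,j) * (2 * \<bar>v $ i\<bar>))"
  proof (rule order_trans[OF sum_abs sum_mono])
    fix j assume "j \<in> {..<n} - {i}"
    then have "M $$ (i,j) \<ge> 0" "\<bar>v $ i - v $ j\<bar> \<le> 2 * \<bar>v $ i\<bar>"
      using nonneg i i_max[of j] by auto
    then show "\<bar>M $$ (i,j) * (v $ i - v $ j)\<bar> \<le> M $$ (i,j) * (2 * \<bar>v $ i\<bar>)"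
      by (simp add: abs_mult mult_left_mono)
  qed
  also have "\<dots> = 2 * (\<Sum>j\<in>{..<n} - {i}. M $$ (i,j)) * \<bar>v $ i\<bar>"
    by (simp add: sum_distrib_left sum_distrib_right mult_ac)
  finally have "\<bar>\<mu>\<bar> \<le> 2 * (\<Sum>j\<in>{..<n} - {i}. M $$ (i,j))" using vi by simp
  then show ?thesis using i by (intro exI[of _ i]) auto
qed

section \<open>Consecutive blocks\<close>

lemma block_start_Suc: "block_start ns (Suc j) = block_start ns j + ns j"
  unfolding block_start_def by simp

lemma block_start_mono: "i \<le> j \<Longrightarrow> block_start ns i \<le> block_start ns j"
  unfolding block_start_def by (rule sum_mono2) auto

definition block_of :: "(nat \<Rightarrow> nat) \<Rightarrow> nat \<Rightarrow> nat" where
  "block_of ns r = (LEAST j. r < block_start ns (Suc j))"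

lemma block_of_eq:
  assumes "in_block ns j r"
  shows "block_of ns r = j"
proof -
  have r: "r < block_start ns (Suc j)" "block_start ns j \<le> r" using assms unfolding in_block_def by auto
  have le: "block_of ns r \<le> j" unfolding block_of_def by (rule Least_le) (fact r(1))
  have "r < block_start ns (Suc (block_of ns r))" unfolding block_of_def by (rule LeastI) (fact r(1))
  then have "\<not> block_of ns r < j" using r(2) block_start_mono[of "Suc (block_of ns r)" j ns] by auto
  then show ?thesis using le by simp
qed

lemma block_of_in_block:
  assumes "r < block_start ns k"
  shows "block_of ns r < k \<and> in_block ns (block_of ns r) r"
proof -
  have "\<exists>j<k. in_block ns j r"
    using assms
  proof (induction k)
    case (Suc k)
    then show ?case
      by (cases "r < block_start ns k") (auto simp: in_block_def not_less intro: less_SucI)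
  qed (simp add: block_start_def)
  then show ?thesis using block_of_eq by auto
qed

lemma sum_block_of:
  "(\<Sum>r<block_start ns k. f (block_of ns r)) = (\<Sum>j<k. of_nat (ns j) * f j)"
proof (induction k)
  case (Suc k)
  have "(\<Sum>r\<in>{block_start ns k..<block_start ns (Suc k)}. f (block_of ns r)) =
      (\<Sum>r\<in>{block_start ns k..<block_start ns (Suc k)}. f k)"
    by (intro sum.cong refl) (simp add: block_of_eq in_block_def)
  then show ?case
    using Suc sum.atLeastLessThan_concat[of 0 "block_start ns k" "block_start ns (Suc k)" "\<lambda>r. f (block_of ns r)"]
    by (simp add: lessThan_atLeast0 block_start_Suc)
qed (simp add: block_start_def)

lemma block_start_in_block: "ns j \<ge> 1 \<Longrightarrow> in_block ns j (block_start ns j)"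
  unfolding in_block_def by (simp add: block_start_Suc)

lemma block_of_block_start: "ns j \<ge> 1 \<Longrightarrow> block_of ns (block_start ns j) = j"
  by (rule block_of_eq[OF block_start_in_block])

lemma block_start_less: "j < k \<Longrightarrow> ns j \<ge> 1 \<Longrightarrow> block_start ns j < block_start ns k"
  using block_start_mono[of "Suc j" k ns] by (simp add: block_start_Suc)

lemma Pmat_carrier: "Pmat k ns \<in> carrier_mat (block_start ns k) k"
  unfolding Pmat_def by simp

lemma Pmat_index:
  "r < block_start ns k \<Longrightarrow> j < k \<Longrightarrow> Pmat k ns $$ (r,j) = (if block_of ns r = j then 1 else 0)"
  using block_of_in_block[of r ns k] block_of_eq[of ns j r] unfolding Pmat_def by auto

lemma sum_lessThan_split:
  fixes f :: "nat \<Rightarrow> 'a :: comm_monoid_add"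
  shows "k \<le> n \<Longrightarrow> (\<Sum>c<n. f c) = (\<Sum>c<k. f c) + (\<Sum>i<n - k. f (k + i))"
  by (simp add: lessThan_atLeast0 sum.atLeastLessThan_concat[where m = 0 and n = k and p = n, symmetric]
      sum.atLeastLessThan_shift_0[where g = f and m = k and n = n] comp_def)

lemma Min_setcompr_le: "(i :: nat) < k \<Longrightarrow> Min {f i | i. i < k} \<le> (f i :: 'a :: linorder)"
  unfolding setcompr_eq_image by (rule Min_le) auto

lemma Max_setcompr_ge: "(i :: nat) < k \<Longrightarrow> (f i :: 'a :: linorder) \<le> Max {f i | i. i < k}"
  unfolding setcompr_eq_image by (rule Max_ge) auto

section \<open>The block Laplacian and its lumped counterpart\<close>

locale block_model =
  fixes k :: nat and ns :: "nat \<Rightarrow> nat" and B :: "real mat"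
  assumes B_carrier: "B \<in> carrier_mat k k" and ns_pos: "\<forall>i<k. ns i \<ge> 1"
begin

abbreviation "N \<equiv> block_start ns k"
abbreviation "P \<equiv> Pmat k ns"
abbreviation "A_blk \<equiv> P * B * transpose_mat P"
abbreviation "L_blk \<equiv> laplacian A_blk"
abbreviation "B_tilde \<equiv> B * diag_of k (\<lambda>i. real (ns i))"
abbreviation "L_tilde \<equiv> laplacian B_tilde"
abbreviation "n_min \<equiv> real (Min {ns i | i. i < k})"
abbreviation "n_max \<equiv> real (Max {ns i | i. i < k})"
abbreviation "alpha_min \<equiv> Min {B $$ (i,i) | i. i < k}"
abbreviation "beta_max \<equiv> Max {(\<Sum>j\<in>{..<k} - {i}. B $$ (i,j)) | i. i < k}"
abbreviation "b_min \<equiv> Min {(\<Sum>j<k. B $$ (i,j)) | i. i < k}"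

definition lumped_degree :: "nat \<Rightarrow> real" where
  "lumped_degree i = (\<Sum>j<k. B $$ (i,j) * real (ns j))"

lemma B_tilde_carrier: "B_tilde \<in> carrier_mat k k"
  using B_carrier by (simp add: diag_of_def)

lemma B_tilde_index: "i < k \<Longrightarrow> j < k \<Longrightarrow> B_tilde $$ (i,j) = B $$ (i,j) * real (ns j)"
  using B_carrier by (simp add: diag_of_def scalar_prod_def if_distrib[of "\<lambda>x. _ * x"] cong: if_cong)

lemma L_tilde_carrier: "L_tilde \<in> carrier_mat k k"
  by (rule laplacian_carrier[OF B_tilde_carrier])

lemma L_tilde_index:
  "i < k \<Longrightarrow> j < k \<Longrightarrow> L_tilde $$ (i,j) = (if i = j then lumped_degree i else 0) - B $$ (i,j) * real (ns j)"
  by (simp add: laplacian_index[OF B_tilde_carrier] B_tilde_index lumped_degree_def)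

lemma A_blk_carrier: "A_blk \<in> carrier_mat N N"
  using B_carrier Pmat_carrier[of k ns] by auto

lemma A_blk_index:
  assumes "x < N" "y < N"
  shows "A_blk $$ (x,y) = B $$ (block_of ns x, block_of ns y)"
proof -
  have "A_blk $$ (x,y) = (\<Sum>i<k. \<Sum>j<k. P $$ (x,i) * B $$ (i,j) * P $$ (y,j))"
    using assms B_carrier Pmat_carrier[of k ns]
    by (simp add: scalar_prod_def lessThan_atLeast0 sum_distrib_left mult.assoc)
  also have "\<dots> = B $$ (block_of ns x, block_of ns y)"
    using assms block_of_in_block[of x ns k] block_of_in_block[of y ns k]
    by (simp add: Pmat_index if_distrib[of "\<lambda>x. x * _"] if_distrib[of "\<lambda>x. _ * x"] cong: if_cong)
  finally show ?thesis .
qed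

lemma L_blk_carrier: "L_blk \<in> carrier_mat N N"
  by (rule laplacian_carrier[OF A_blk_carrier])

lemma L_blk_index:
  assumes "x < N" "y < N"
  shows "L_blk $$ (x,y) =
    (if x = y then lumped_degree (block_of ns x) else 0) - B $$ (block_of ns x, block_of ns y)"
proof -
  have "(\<Sum>l<N. A_blk $$ (x,l)) = (\<Sum>l<N. B $$ (block_of ns x, block_of ns l))"
    using assms by (intro sum.cong refl) (simp add: A_blk_index)
  also have "\<dots> = lumped_degree (block_of ns x)"
    unfolding sum_block_of[of "\<lambda>j. B $$ (block_of ns x, j)"] lumped_degree_def by (simp add: mult.commute)
  finally show ?thesis
    using assms by (cases "x = y") (simp_all add: laplacian_index[OF A_blk_carrier] A_blk_index)
qed

lemma L_blk_symmetric:
  assumes "\<forall>i<k. \<forall>j<k. B $$ (i,j) = B $$ (j,i)"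
  shows "transpose_mat L_blk = L_blk"
  using assms L_blk_carrier block_of_in_block[of _ ns k]
  by (intro eq_matI) (auto simp: L_blk_index)

lemma Pmat_mult_vec_index:
  "u \<in> carrier_vec k \<Longrightarrow> r < N \<Longrightarrow> (P *\<^sub>v u) $ r = u $ block_of ns r"
  using Pmat_carrier[of k ns] block_of_in_block[of r ns k]
  by (simp add: scalar_prod_def lessThan_atLeast0 Pmat_index if_distrib[of "\<lambda>x. x * _"] cong: if_cong)

lemma Pmat_mult_index:
  "X \<in> carrier_mat k m \<Longrightarrow> x < N \<Longrightarrow> c < m \<Longrightarrow> (P * X) $$ (x,c) = X $$ (block_of ns x, c)"
  using Pmat_mult_vec_index[of "col X c" x] Pmat_carrier[of k ns] block_of_in_block[of x ns k] by simp

lemma L_blk_mult_Pmat: "L_blk * P = P * L_tilde"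
proof (rule eq_matI)
  fix x c assume "x < dim_row (P * L_tilde)" "c < dim_col (P * L_tilde)"
  then have x: "x < N" and c: "c < k" using Pmat_carrier[of k ns] L_tilde_carrier by auto
  have bx: "block_of ns x < k" using block_of_in_block[OF x] by simp
  have "(L_blk * P) $$ (x,c) = (\<Sum>y<N. L_blk $$ (x,y) * P $$ (y,c))"
    using x c L_blk_carrier Pmat_carrier[of k ns] by (simp add: scalar_prod_def lessThan_atLeast0)
  also have "\<dots> = (\<Sum>y<N. if y = x then (if block_of ns x = c then lumped_degree c else 0) else 0)
      - (\<Sum>y<N. if block_of ns y = c then B $$ (block_of ns x, c) else 0)"
    unfolding sum_subtractf[symmetric]
    by (intro sum.cong refl) (use x c in \<open>auto simp: L_blk_index Pmat_index\<close>)
  also have "\<dots> = (if block_of ns x = c then lumped_degree c else 0) - real (ns c) * B $$ (block_of ns x, c)"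
    using x c sum_block_of[of "\<lambda>j. if j = c then B $$ (block_of ns x, c) else 0" ns k]
    by (simp add: if_distrib[of "\<lambda>x. _ * x"] cong: if_cong)
  also have "\<dots> = (\<Sum>j<k. if block_of ns x = j then L_tilde $$ (j,c) else 0)"
    using bx c by (simp add: L_tilde_index)
  also have "\<dots> = (P * L_tilde) $$ (x,c)"
    using x c L_tilde_carrier Pmat_carrier[of k ns]
    by (simp add: scalar_prod_def lessThan_atLeast0 Pmat_index if_distrib[of "\<lambda>x. x * _"] cong: if_cong)
  finally show "(L_blk * P) $$ (x,c) = (P * L_tilde) $$ (x,c)" .
qed (use L_blk_carrier L_tilde_carrier Pmat_carrier[of k ns] in auto)

lemma eigenvector_L_blk_Pmat:
  assumes "eigenvector L_tilde v \<mu>"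
  shows "eigenvector L_blk (P *\<^sub>v v) \<mu>"
proof -
  have v: "v \<in> carrier_vec k" "v \<noteq> 0\<^sub>v k" and Lv: "L_tilde *\<^sub>v v = \<mu> \<cdot>\<^sub>v v"
    using assms L_tilde_carrier unfolding eigenvector_def by auto
  obtain j where j: "j < k" "v $ j \<noteq> 0" using v by (metis eq_vecI carrier_vecD index_zero_vec)
  have "(P *\<^sub>v v) $ block_start ns j = v $ j"
    using j ns_pos by (simp add: Pmat_mult_vec_index[OF v(1)] block_start_less block_of_block_start)
  then have "P *\<^sub>v v \<noteq> 0\<^sub>v N" using j ns_pos block_start_less[of j k ns] by auto
  moreover have "L_blk *\<^sub>v (P *\<^sub>v v) = \<mu> \<cdot>\<^sub>v (P *\<^sub>v v)"
    using L_blk_carrier Pmat_carrier[of k ns] L_tilde_carrier v Lv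
    by (simp add: assoc_mult_mat_vec[symmetric] L_blk_mult_Pmat assoc_mult_mat_vec mult_mat_vec)
  ultimately show ?thesis
    unfolding eigenvector_def using L_blk_carrier Pmat_carrier[of k ns] v by auto
qed

lemma k_le_N: "k \<le> N"
proof -
  have "(\<Sum>i<k. 1) \<le> (\<Sum>i<k. ns i)" using ns_pos by (intro sum_mono) auto
  then show ?thesis by (simp add: block_start_def)
qed

definition nonstart_rows :: "nat list" where
  "nonstart_rows = filter (\<lambda>r. block_start ns (block_of ns r) \<noteq> r) [0..<N]"

lemma length_nonstart_rows: "length nonstart_rows = N - k"
proof -
  let ?starts = "filter (\<lambda>r. block_start ns (block_of ns r) = r) [0..<N]"
  have "set ?starts = block_start ns ` {..<k}"
  proof (intro equalityI subsetI)
    fix r assume "r \<in> set ?starts"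
    then show "r \<in> block_start ns ` {..<k}"
      using block_of_in_block[of r ns k] by (auto intro: image_eqI[of r _ "block_of ns r"])
  next
    fix r assume "r \<in> block_start ns ` {..<k}"
    then show "r \<in> set ?starts"
      using ns_pos block_start_less[of _ k ns] block_of_block_start[of ns] by auto
  qed
  moreover have "inj_on (block_start ns) {..<k}"
    by (intro inj_onI) (metis block_of_block_start lessThan_iff ns_pos)
  ultimately have "length ?starts = k"
    using distinct_card[of ?starts] card_image by fastforce
  then show ?thesis
    using sum_length_filter_compl[of "\<lambda>r. block_start ns (block_of ns r) = r" "[0..<N]"]
    by (simp add: nonstart_rows_def)
qed

lemma nonstart_rows_nth:
  assumes "i < N - k"
  shows "nonstart_rows ! i < N" "\<And>j. j < k \<Longrightarrow> nonstart_rows ! i \<noteq> block_start ns j"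
  using nth_mem[of i nonstart_rows] assms length_nonstart_rows ns_pos block_of_block_start[of ns]
  unfolding nonstart_rows_def by auto

lemma nonstart_rows_nth_eq_iff: "i < N - k \<Longrightarrow> j < N - k \<Longrightarrow> nonstart_rows ! i = nonstart_rows ! j \<longleftrightarrow> i = j"
  using nth_eq_iff_index_eq[of nonstart_rows] length_nonstart_rows unfolding nonstart_rows_def by simp

definition extra_degrees :: "real list" where
  "extra_degrees = map (\<lambda>r. lumped_degree (block_of ns r)) nonstart_rows"

text \<open>Column \<open>c < k\<close> of \<open>Q\<close> is column \<open>c\<close> of \<open>P\<close>; column \<open>k + i\<close> is the unit vector of the
  \<open>i\<close>-th row that does not start a block. In this basis \<open>L_blk\<close> becomes the block upper
  triangular matrix \<open>M\<close>.\<close>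

definition Q :: "real mat" where
  "Q = mat N N (\<lambda>(r,c). if c < k then P $$ (r,c) else if r = nonstart_rows ! (c - k) then 1 else 0)"

definition M :: "real mat" where
  "M = four_block_mat L_tilde (mat k (N - k) (\<lambda>(j,c). - B $$ (j, block_of ns (nonstart_rows ! c))))
     (0\<^sub>m (N - k) k) (diag_of (N - k) (\<lambda>c. extra_degrees ! c))"

lemma Q_carrier: "Q \<in> carrier_mat N N"
  unfolding Q_def by simp

lemma M_carrier: "M \<in> carrier_mat N N"
proof -
  have "M \<in> carrier_mat (k + (N - k)) (k + (N - k))"
    unfolding M_def using L_tilde_carrier by (intro four_block_carrier_mat) (auto simp: diag_of_def)
  then show ?thesis using k_le_N by simp
qed

lemma Q_mult_vec_index:
  assumes v: "v \<in> carrier_vec N" and r: "r < N"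
  shows "(Q *\<^sub>v v) $ r = v $ block_of ns r + (\<Sum>i<N - k. if r = nonstart_rows ! i then v $ (k + i) else 0)"
proof -
  have "(Q *\<^sub>v v) $ r = (\<Sum>c<k. Q $$ (r,c) * v $ c) + (\<Sum>i<N - k. Q $$ (r, k + i) * v $ (k + i))"
    using v r Q_carrier by (simp add: scalar_prod_def lessThan_atLeast0[symmetric] sum_lessThan_split[OF k_le_N])
  also have "(\<Sum>c<k. Q $$ (r,c) * v $ c) = v $ block_of ns r"
    using r block_of_in_block[OF r] k_le_N
    by (simp add: Q_def Pmat_index if_distrib[of "\<lambda>x. x * _"] cong: if_cong)
  finally show ?thesis using r by (simp add: Q_def if_distrib[of "\<lambda>x. x * _"] cong: if_cong)
qed

lemma det_Q_nonzero: "det Q \<noteq> 0"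
proof -
  have "v = 0\<^sub>v N" if v: "v \<in> carrier_vec N" and Qv: "Q *\<^sub>v v = 0\<^sub>v N" for v
  proof -
    have low: "v $ j = 0" if j: "j < k" for j
    proof -
      have "(\<Sum>i<N - k. if block_start ns j = nonstart_rows ! i then v $ (k + i) else 0) = 0"
        by (intro sum.neutral ballI) (simp add: nonstart_rows_nth(2)[OF _ j, THEN not_sym])
      then show ?thesis
        using Q_mult_vec_index[OF v block_start_less[OF j]] Qv j ns_pos block_start_less[OF j]
          block_of_block_start[of ns j] by auto
    qed
    then have high: "v $ (k + i) = 0" if i: "i < N - k" for i
      using Q_mult_vec_index[OF v nonstart_rows_nth(1)[OF i]] Qv i nonstart_rows_nth(1)[OF i]
        block_of_in_block[OF nonstart_rows_nth(1)[OF i]] nonstart_rows_nth_eq_iff[OF i]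
      by (auto cong: if_cong)
    show "v = 0\<^sub>v N"
    proof (rule eq_vecI)
      fix c assume "c < dim_vec (0\<^sub>v N)"
      then show "v $ c = 0\<^sub>v N $ c"
        using low high[of "c - k"] by (cases "c < k") auto
    qed (use v in simp)
  qed
  then show ?thesis using det_0_iff_vec_prod_zero_field[OF Q_carrier] by blast
qed

lemma M_index:
  assumes "y < N" "c < N"
  shows "M $$ (y,c) =
    (if y < k then if c < k then L_tilde $$ (y,c) else - B $$ (y, block_of ns (nonstart_rows ! (c - k)))
     else if c < k then 0 else if y = c then lumped_degree (block_of ns (nonstart_rows ! (c - k))) else 0)"
  using assms L_tilde_carrier length_nonstart_rows
  unfolding M_def by (auto simp: diag_of_def extra_degrees_def)

lemma L_blk_mult_Q: "L_blk * Q = Q * M"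
proof (rule eq_matI)
  fix x c assume "x < dim_row (Q * M)" "c < dim_col (Q * M)"
  then have x: "x < N" and c: "c < N" using Q_carrier M_carrier by auto
  have bx: "block_of ns x < k" using block_of_in_block[OF x] by simp
  have "(Q * M) $$ (x,c) = (Q *\<^sub>v col M c) $ x" using x c Q_carrier M_carrier by simp
  also have "\<dots> = col M c $ block_of ns x + (\<Sum>i<N - k. if x = nonstart_rows ! i then col M c $ (k + i) else 0)"
    using x M_carrier c by (simp add: Q_mult_vec_index)
  finally have QM: "(Q * M) $$ (x,c) = M $$ (block_of ns x, c) + (\<Sum>i<N - k. if x = nonstart_rows ! i then M $$ (k + i, c) else 0)"
    using x c bx M_carrier k_le_N by (simp cong: if_cong)
  have LQ: "(L_blk * Q) $$ (x,c) = row L_blk x \<bullet> col Q c" using x c L_blk_carrier Q_carrier by simp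
  show "(L_blk * Q) $$ (x,c) = (Q * M) $$ (x,c)"
  proof (cases "c < k")
    case True
    have "col Q c = col P c" using True c Pmat_carrier[of k ns] by (intro eq_vecI) (auto simp: Q_def)
    then have "(L_blk * Q) $$ (x,c) = (P * L_tilde) $$ (x,c)"
      unfolding LQ L_blk_mult_Pmat[symmetric] using x True L_blk_carrier Pmat_carrier[of k ns] by simp
    moreover have "(\<Sum>i<N - k. if x = nonstart_rows ! i then M $$ (k + i, c) else 0) = 0"
      using True c by (intro sum.neutral) (auto simp: M_index)
    ultimately show ?thesis
      unfolding QM using x c True bx k_le_N by (simp add: Pmat_mult_index[OF L_tilde_carrier] M_index)
  next
    case False
    define r where "r = nonstart_rows ! (c - k)"
    have ck: "c - k < N - k" using c False by simp
    have r: "r < N" unfolding r_def by (rule nonstart_rows_nth(1)[OF ck])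
    have "col Q c = unit_vec N r" using False c by (intro eq_vecI) (auto simp: Q_def r_def unit_vec_def)
    then have "(L_blk * Q) $$ (x,c) = L_blk $$ (x,r)" unfolding LQ using x r L_blk_carrier by simp
    moreover have "(\<Sum>i<N - k. if x = nonstart_rows ! i then M $$ (k + i, c) else 0) =
        (\<Sum>i<N - k. if i = c - k then (if x = r then lumped_degree (block_of ns r) else 0) else 0)"
      using c False nonstart_rows_nth_eq_iff[OF ck] by (intro sum.cong refl) (auto simp: M_index r_def)
    ultimately show ?thesis
      unfolding QM using x c r False bx k_le_N ck by (simp add: L_blk_index M_index r_def)
  qed
qed (use Q_carrier M_carrier L_blk_carrier in auto)

lemma char_poly_L_blk: "char_poly L_blk = char_poly L_tilde * (\<Prod>a\<leftarrow>extra_degrees. [:- a, 1:])"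
proof -
  have "char_poly L_blk = char_poly M"
    by (rule char_poly_eq_if_intertwined[OF L_blk_carrier M_carrier Q_carrier det_Q_nonzero L_blk_mult_Q])
  also have "\<dots> = char_poly L_tilde * char_poly (diag_of (N - k) (\<lambda>c. extra_degrees ! c))"
    unfolding M_def by (rule char_poly_four_block_lower_left_zero[OF L_tilde_carrier]) (auto simp: diag_of_def)
  also have "char_poly (diag_of (N - k) (\<lambda>c. extra_degrees ! c)) = (\<Prod>a\<leftarrow>extra_degrees. [:- a, 1:])"
    using map_nth[of extra_degrees] by (simp add: char_poly_diag_of extra_degrees_def length_nonstart_rows)
  finally show ?thesis .
qed

lemma proots_L_blk: "proots (char_poly L_blk) = proots (char_poly L_tilde) + mset extra_degrees"
proof -
  have "char_poly L_tilde \<noteq> 0" using degree_monic_char_poly[OF L_tilde_carrier] by auto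
  moreover have "(\<Prod>a\<leftarrow>extra_degrees. [:- a, 1:]) \<noteq> 0" by (auto simp: prod_list_zero_iff)
  ultimately show ?thesis unfolding char_poly_L_blk by (simp add: proots_mult proots_prod_linear_factors)
qed

lemma eigenvector_L_blk_constant_on_blocks:
  assumes ev: "eigenvector L_blk x \<mu>" and below: "\<forall>j<k. \<mu> < lumped_degree j" and r: "r < N"
  shows "x $ r = x $ block_start ns (block_of ns r)"
proof -
  have x: "x \<in> carrier_vec N" and Lx: "L_blk *\<^sub>v x = \<mu> \<cdot>\<^sub>v x"
    using ev L_blk_carrier unfolding eigenvector_def by auto
  define \<sigma> where "\<sigma> i = (\<Sum>y<N. B $$ (i, block_of ns y) * x $ y)" for i
  have block_value: "x $ s = \<sigma> (block_of ns s) / (lumped_degree (block_of ns s) - \<mu>)" if s: "s < N" for s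
  proof -
    have "\<mu> * x $ s = (\<Sum>y<N. L_blk $$ (s,y) * x $ y)"
      using arg_cong[OF Lx, of "\<lambda>w. w $ s"] L_blk_carrier x s by (simp add: scalar_prod_def lessThan_atLeast0)
    also have "\<dots> = lumped_degree (block_of ns s) * x $ s - \<sigma> (block_of ns s)"
      using s by (simp add: L_blk_index \<sigma>_def left_diff_distrib sum_subtractf if_distrib[of "\<lambda>x. x * _"] cong: if_cong)
    finally have "(lumped_degree (block_of ns s) - \<mu>) * x $ s = \<sigma> (block_of ns s)"
      by (simp add: algebra_simps)
    moreover have "lumped_degree (block_of ns s) - \<mu> > 0" using below block_of_in_block[OF s] by simp
    ultimately show ?thesis by (simp add: field_simps)
  qed
  have "block_of ns r < k" using block_of_in_block[OF r] by simp
  then show ?thesis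
    using block_value[OF r] block_value[OF block_start_less] ns_pos block_of_block_start[of ns] by simp
qed

lemma k_block_ideal_L_blk:
  assumes sym: "\<forall>i<k. \<forall>j<k. B $$ (i,j) = B $$ (j,i)"
    and below: "\<forall>i<k. \<forall>j<k. lambda_i L_blk (Suc i) < lumped_degree j"
  shows "k_block_ideal L_blk k ns"
  unfolding k_block_ideal_def
proof (intro conjI allI impI)
  show "\<exists>V. ortho_eigs_k L_blk k V"
    using symmetric_mat_ortho_eigs[OF L_blk_carrier L_blk_symmetric[OF sym]] ortho_eigs_k_take k_le_N by blast
next
  fix V assume V: "ortho_eigs_k L_blk k V"
  then have len: "length V = k" and ev: "\<And>i. i < k \<Longrightarrow> eigenvector L_blk (V ! i) (lambda_i L_blk (Suc i))"
    and orth: "\<And>i j. i < k \<Longrightarrow> j < k \<Longrightarrow> V ! i \<bullet> V ! j = (if i = j then 1 else 0)"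
    unfolding ortho_eigs_k_def by auto
  have V_carrier: "V ! i \<in> carrier_vec N" if "i < k" for i
    using ev[OF that] L_blk_carrier unfolding eigenvector_def by simp
  define W where "W = mat_of_cols N V"
  define S where "S = mat k k (\<lambda>(j,c). V ! c $ block_start ns j)"
  have W: "W \<in> carrier_mat N k" unfolding W_def using len by auto
  have S: "S \<in> carrier_mat k k" unfolding S_def by simp
  have "W = P * S"
  proof (rule eq_matI)
    fix x c assume "x < dim_row (P * S)" "c < dim_col (P * S)"
    then have x: "x < N" and c: "c < k" using Pmat_carrier[of k ns] S by auto
    have "W $$ (x,c) = V ! c $ block_start ns (block_of ns x)"
      unfolding W_def using x c len below
      by (simp add: mat_of_cols_index eigenvector_L_blk_constant_on_blocks[OF ev])
    also have "\<dots> = (P * S) $$ (x,c)"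
      using x c block_of_in_block[OF x] Pmat_mult_index[OF S x c] by (simp add: S_def)
    finally show "W $$ (x,c) = (P * S) $$ (x,c)" .
  qed (use W S Pmat_carrier[of k ns] in auto)
  moreover have "transpose_mat W * W = 1\<^sub>m k"
    unfolding transpose_mult_self_eq_one_iff[OF W] using orth V_carrier len
    by (simp add: W_def col_mat_of_cols)
  ultimately have "invertible_mat S"
    using invertible_if_orthonormal_factor[OF W Pmat_carrier S] by blast
  then show "\<exists>S\<in>carrier_mat k k. invertible_mat S \<and> mat_of_cols (dim_row L_blk) V = P * S"
    using S \<open>W = P * S\<close> L_blk_carrier unfolding W_def by auto
qed

lemma extra_degree_is_lumped_degree: "b \<in> set extra_degrees \<Longrightarrow> \<exists>j<k. b = lumped_degree j"
  using block_of_in_block[of _ ns k] unfolding extra_degrees_def nonstart_rows_def by auto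

lemma eigs_sorted_L_blk:
  assumes sym: "\<forall>i<k. \<forall>j<k. B $$ (i,j) = B $$ (j,i)"
    and below: "\<And>\<mu> j. eigenvalue L_tilde \<mu> \<Longrightarrow> j < k \<Longrightarrow> \<mu> < lumped_degree j"
  shows "eigs_sorted L_blk = eigs_sorted L_tilde @ sort extra_degrees"
    and "length (eigs_sorted L_tilde) = k"
proof -
  have "\<forall>a\<in>#proots (char_poly L_tilde). \<forall>b\<in>#mset extra_degrees. a \<le> b"
    using below extra_degree_is_lumped_degree in_proots_char_poly_iff[OF L_tilde_carrier]
    by (metis less_imp_le set_mset_mset)
  then show eigs: "eigs_sorted L_blk = eigs_sorted L_tilde @ sort extra_degrees"
    unfolding eigs_sorted_def proots_L_blk by (simp add: sorted_list_of_multiset_plus)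
  have "length (eigs_sorted L_blk) = N"
    using symmetric_mat_ortho_eigs[OF L_blk_carrier L_blk_symmetric[OF sym]] by blast
  then show "length (eigs_sorted L_tilde) = k"
    using eigs k_le_N by (simp add: extra_degrees_def length_nonstart_rows)
qed

lemma spectrum_L_blk:
  assumes sym: "\<forall>i<k. \<forall>j<k. B $$ (i,j) = B $$ (j,i)" and kN: "k < N"
    and below: "\<And>\<mu> j. eigenvalue L_tilde \<mu> \<Longrightarrow> j < k \<Longrightarrow> \<mu> < lumped_degree j"
  shows "\<And>i. i \<in> {1..k} \<Longrightarrow> lambda_i L_blk i = lambda_i L_tilde i \<and> eigenvalue L_tilde (lambda_i L_tilde i)"
    and "\<exists>j<k. lambda_i L_blk (k + 1) = lumped_degree j"
proof -
  note eigs = eigs_sorted_L_blk[OF sym below]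
  show "lambda_i L_blk i = lambda_i L_tilde i \<and> eigenvalue L_tilde (lambda_i L_tilde i)" if "i \<in> {1..k}" for i
    using that eigs eigenvalue_lambda_i[OF L_tilde_carrier]
    by (auto simp: lambda_i_def nth_append)
  have "extra_degrees \<noteq> []" using kN by (simp add: extra_degrees_def length_nonstart_rows flip: length_greater_0_conv)
  then have "lambda_i L_blk (k + 1) \<in> set extra_degrees"
    using eigs by (simp add: lambda_i_def nth_append) (metis length_greater_0_conv nth_mem length_sort set_sort)
  then show "\<exists>j<k. lambda_i L_blk (k + 1) = lumped_degree j"
    by (rule extra_degree_is_lumped_degree)
qed

lemma n_min_pos: "0 < k \<Longrightarrow> 0 < n_min"
  using ns_pos by (subst of_nat_0_less_iff, subst Min_gr_iff) auto

lemma lumped_degree_lower_bounds: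
  assumes nonneg: "\<forall>i<k. \<forall>j<k. B $$ (i,j) \<ge> 0" and i: "i < k"
  shows "alpha_min * n_min \<le> lumped_degree i" and "b_min * n_min \<le> lumped_degree i"
proof -
  have n_min_le: "n_min \<le> real (ns j)" if "j < k" for j using Min_setcompr_le[OF that, of ns] by simp
  have "alpha_min * n_min \<le> B $$ (i,i) * real (ns i)"
    using i nonneg n_min_le[OF i] by (intro mult_mono Min_setcompr_le) auto
  also have "\<dots> \<le> lumped_degree i"
    unfolding lumped_degree_def using i nonneg by (intro member_le_sum) auto
  finally show "alpha_min * n_min \<le> lumped_degree i" .
  have "b_min * n_min \<le> (\<Sum>j<k. B $$ (i,j)) * n_min"
    using i by (intro mult_right_mono Min_setcompr_le) auto
  also have "\<dots> \<le> lumped_degree i"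
    unfolding lumped_degree_def sum_distrib_right using i nonneg n_min_le
    by (intro sum_mono mult_left_mono) auto
  finally show "b_min * n_min \<le> lumped_degree i" .
qed

lemma eigenvalue_L_tilde_le:
  assumes nonneg: "\<forall>i<k. \<forall>j<k. B $$ (i,j) \<ge> 0" and ev: "eigenvalue L_tilde \<mu>"
  shows "\<mu> \<le> 2 * n_max * beta_max"
proof -
  obtain v where "eigenvector L_tilde v \<mu>" using ev unfolding eigenvalue_def by blast
  moreover have "\<forall>i<k. \<forall>j<k. i \<noteq> j \<longrightarrow> B_tilde $$ (i,j) \<ge> 0" using nonneg by (simp add: B_tilde_index)
  ultimately obtain i where i: "i < k" and le: "\<mu> \<le> 2 * (\<Sum>j\<in>{..<k} - {i}. B_tilde $$ (i,j))"
    using laplacian_eigenvalue_le_twice_row_sum[OF B_tilde_carrier] by blast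
  have "(\<Sum>j\<in>{..<k} - {i}. B_tilde $$ (i,j)) \<le> (\<Sum>j\<in>{..<k} - {i}. B $$ (i,j) * n_max)"
    using i nonneg Max_setcompr_ge[of _ k ns] by (intro sum_mono) (auto simp: B_tilde_index intro: mult_left_mono)
  also have "\<dots> \<le> n_max * beta_max"
    unfolding sum_distrib_right[symmetric] using i
    by (subst mult.commute, intro mult_left_mono Max_setcompr_ge) auto
  finally show ?thesis using le by linarith
qed

end

theorem proposition10:
  fixes k :: nat and ns :: "nat \<Rightarrow> nat" and B :: "real mat"
  assumes ns_pos: "\<forall>i<k. ns i \<ge> 1"
    and n_gt_k: "(\<Sum>i<k. ns i) > k"
    and B_carrier: "B \<in> carrier_mat k k"
    and B_sym: "\<forall>i<k. \<forall>j<k. B $$ (i,j) = B $$ (j,i)"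
    and B_nonneg: "\<forall>i<k. \<forall>j<k. B $$ (i,j) \<ge> 0"
    and Delta_pos:
      "Min {B $$ (i,i) | i. i < k}
        - 2 * real (Max {ns i | i. i < k}) / real (Min {ns i | i. i < k})
          * Max {(\<Sum>j\<in>{..<k} - {i}. B $$ (i,j)) | i. i < k} > 0"
  shows
    "(let P = Pmat k ns;
          A_blk = P * B * transpose_mat P;
          L_blk = laplacian A_blk;
          Bt = B * diag_of k (\<lambda>i. real (ns i));
          Lt = laplacian Bt;
          nmin = real (Min {ns i | i. i < k});
          nmax = real (Max {ns i | i. i < k});
          bmin = Min {(\<Sum>j<k. B $$ (i,j)) | i. i < k};
          Delta = Min {B $$ (i,i) | i. i < k}
                  - 2 * nmax / nmin * Max {(\<Sum>j\<in>{..<k} - {i}. B $$ (i,j)) | i. i < k}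
      in
        (\<forall>i\<in>{1..k}. lambda_i L_blk i = lambda_i Lt i \<and>
            (\<forall>v. eigenvector Lt v (lambda_i Lt i) \<longrightarrow>
                 eigenvector L_blk (P *\<^sub>v v) (lambda_i L_blk i)))
      \<and> k_block_ideal L_blk k ns
      \<and> lambda_i L_blk (k+1) \<ge> bmin * nmin
      \<and> lambda_i L_blk (k+1) - lambda_i L_blk k \<ge> Delta * nmin)"
proof -
  interpret block_model k ns B using B_carrier ns_pos by unfold_locales
  have "0 < k" using n_gt_k by (cases k) auto
  then have Delta_scaled: "(alpha_min - 2 * n_max / n_min * beta_max) * n_min = alpha_min * n_min - 2 * n_max * beta_max"
    using n_min_pos by (simp add: field_simps)
  have gap: "2 * n_max * beta_max < alpha_min * n_min"
    using mult_pos_pos[OF Delta_pos n_min_pos[OF \<open>0 < k\<close>]] Delta_scaled by simp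
  have below: "\<mu> < lumped_degree j" if "eigenvalue L_tilde \<mu>" "j < k" for \<mu> j
    using eigenvalue_L_tilde_le[OF B_nonneg that(1)] lumped_degree_lower_bounds(1)[OF B_nonneg that(2)] gap
    by linarith
  have kN: "k < N" using n_gt_k by (simp add: block_start_def)
  note low = spectrum_L_blk(1)[OF B_sym kN below]
  obtain j where j: "j < k" "lambda_i L_blk (k + 1) = lumped_degree j"
    using spectrum_L_blk(2)[OF B_sym kN below] by blast
  have "k_block_ideal L_blk k ns"
    using low below by (intro k_block_ideal_L_blk[OF B_sym]) auto
  moreover have "lambda_i L_blk k \<le> 2 * n_max * beta_max"
    using low[of k] \<open>0 < k\<close> eigenvalue_L_tilde_le[OF B_nonneg] by auto
  ultimately show ?thesis
    unfolding Let_def Delta_scaled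
    using low eigenvector_L_blk_Pmat j lumped_degree_lower_bounds[OF B_nonneg j(1)] by auto
qed

end
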